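(* Let $A$ be an alphabet of size $k$ with $k>1$, and suppose $L\subseteq A^*$ is $n$-PT. Then the canonical (minimal) DFA for $L$ has at most $m$ states, where $\log m = k\left(\frac{n+2k-3}{k-1}\right)^{k-1}\log n\,\log k$, with $\log$ denoting the logarithm to base $2$. Thus, for fixed $k$, the number of states of the canonical DFA of $L$ is in $2^{O(n^{k-1}\log n)}$ where $n=h(L)$.
   Context: For $n\in\mathbb{N}$, $u\sim_n v$ iff $u$ and $v$ have exactly the same (scattered) subwords of length at most $n$. A language $L\subseteq A^*$ is $n$-PT if it is a union of $\sim_n$-classes; $h(L)$ is the least $n$ such that $L$ is $n$-PT. *)

theory Defs
  imports Complex_Main "HOL-Library.Sublist"
begin

definition subwords_upto :: "nat \<Rightarrow> 'a list \<Rightarrow> 'a list set" where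
  "subwords_upto n u = {v. subseq v u \<and> length v \<le> n}"

definition simon_eq :: "nat \<Rightarrow> 'a list \<Rightarrow> 'a list \<Rightarrow> bool" where
  "simon_eq n u v \<longleftrightarrow> subwords_upto n u = subwords_upto n v"

definition n_PT :: "'a set \<Rightarrow> nat \<Rightarrow> 'a list set \<Rightarrow> bool" where
  "n_PT A n L \<longleftrightarrow> L \<subseteq> lists A \<and>
     (\<forall>u\<in>lists A. \<forall>v\<in>lists A. simon_eq n u v \<longrightarrow> (u \<in> L \<longleftrightarrow> v \<in> L))"

definition left_quot :: "'a set \<Rightarrow> 'a list \<Rightarrow> 'a list set \<Rightarrow> 'a list set" where
  "left_quot A u L = {w \<in> lists A. u @ w \<in> L}"

text \<open>States of the canonical (minimal, complete) DFA of L over A: the set of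
  left quotients u^{-1}L, u \<in> A*.\<close>
definition canonical_dfa_states :: "'a set \<Rightarrow> 'a list set \<Rightarrow> 'a list set set" where
  "canonical_dfa_states A L = {left_quot A u L | u. u \<in> lists A}"

end

theory Submission
  imports Defs
begin

text \<open>Call a word \<open>r\<close>-universal if it contains every word of length \<open>r\<close> over \<open>A\<close> as a
  subword. If \<open>u\<close> has universality index \<open>m \<ge> 1\<close>, its arch factorisation \<open>u = x a v\<close>
  (\<open>x\<close> contains every letter but \<open>a\<close>) has \<open>v\<close> of index \<open>m - 1\<close>, and because universal
  neighbours absorb long subwords, the \<open>\<sim>\<^sub>p\<close>-class of \<open>u\<close> is determined by \<open>a\<close>, the
  \<open>\<sim>\<^bsub>p-m+1\<^esub>\<close>-class of \<open>x\<close> over the alphabet \<open>A - {a}\<close> and the \<open>\<sim>\<^bsub>p-1\<^esub>\<close>-class of \<open>v\<close>.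
  This yields a recursion in the alphabet size for the number of \<open>\<sim>\<^sub>p\<close>-classes, which a
  weighted AM-GM inequality solves to \<open>2\<^sup>E\<close> with \<open>E\<close> the exponent of the theorem. Since
  an \<open>n\<close>-PT language is saturated by the right congruence \<open>\<sim>\<^sub>n\<close>, its left quotients are
  indexed by \<open>\<sim>\<^sub>n\<close>-classes.\<close>

section \<open>Universal words\<close>

definition universal :: "'a set \<Rightarrow> nat \<Rightarrow> 'a list \<Rightarrow> bool" where
  "universal A r y \<longleftrightarrow> (\<forall>w\<in>lists A. length w \<le> r \<longrightarrow> subseq w y)"

lemma subseq_set_subset: "subseq xs ys \<Longrightarrow> set xs \<subseteq> set ys"
  by (auto elim: list_emb_set)

lemma universal_0 [simp]: "universal A 0 y"
  by (simp add: universal_def)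

lemma universal_append_left: "universal A m v \<Longrightarrow> universal A m (t @ v)"
  by (simp add: universal_def subseq_drop_many)

lemma universal_Suc_imp_subset_set: "universal A (Suc m) u \<Longrightarrow> A \<subseteq> set u"
proof
  fix c assume "universal A (Suc m) u" "c \<in> A"
  then have "subseq [c] u" unfolding universal_def by simp
  then show "c \<in> set u" by (simp add: subseq_singleton_left)
qed

lemma not_universal_1:
  assumes "\<not> universal A 1 u" "u \<in> lists A"
  shows "\<exists>b\<in>A. u \<in> lists (A - {b})"
proof -
  obtain w where w: "w \<in> lists A" "length w \<le> 1" "\<not> subseq w u"
    using assms(1) unfolding universal_def by auto
  then obtain b where "w = [b]" by (cases w) auto
  then show ?thesis using w assms(2) by (auto simp: subseq_singleton_left)
qed

lemma arch_factorization:
  assumes "A \<noteq> {}" "A \<subseteq> set u"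
  shows "\<exists>x a v. u = x @ a # v \<and> a \<notin> set x \<and> A \<subseteq> insert a (set x)"
  using assms(2)
proof (induction u rule: rev_induct)
  case Nil then show ?case using assms(1) by auto
next
  case (snoc c u)
  show ?case
  proof (cases "A \<subseteq> set u")
    case True
    then obtain x a v where "u = x @ a # v" "a \<notin> set x" "A \<subseteq> insert a (set x)"
      using snoc.IH by blast
    then show ?thesis by (intro exI[of _ x] exI[of _ a] exI[of _ "v @ [c]"]) auto
  next
    case False
    then show ?thesis using snoc.prems by (intro exI[of _ u] exI[of _ c] exI[of _ "[]"]) auto
  qed
qed

lemma universal_arch_iff:
  assumes "a \<in> A" "a \<notin> set x" "A \<subseteq> insert a (set x)"
  shows "universal A (Suc m) (x @ a # v) \<longleftrightarrow> universal A m v"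
proof
  assume univ: "universal A (Suc m) (x @ a # v)"
  show "universal A m v"
    unfolding universal_def
  proof (intro ballI impI)
    fix w assume "w \<in> lists A" "length w \<le> m"
    then have "subseq (a # w) (x @ a # v)" using univ assms(1) unfolding universal_def by simp
    then obtain w1 w2 where w: "a # w = w1 @ w2" "subseq w1 x" "subseq w2 (a # v)"
      by (auto elim: subseq_appendE)
    have "w1 = []"
      using w(1) subseq_set_subset[OF w(2)] assms(2) by (cases w1) auto
    then show "subseq w v" using w by (metis append_Nil subseq_Cons2')
  qed
next
  assume univ: "universal A m v"
  show "universal A (Suc m) (x @ a # v)"
    unfolding universal_def
  proof (intro ballI impI)
    fix w assume w: "w \<in> lists A" "length w \<le> Suc m"
    show "subseq w (x @ a # v)"
    proof (cases w)
      case Nil then show ?thesis by simp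
    next
      case (Cons c w')
      then have "subseq [c] (x @ [a])" using w assms(3) by (auto simp: subseq_singleton_left)
      moreover have "subseq w' v" using univ w Cons unfolding universal_def by simp
      ultimately have "subseq ([c] @ w') ((x @ [a]) @ v)" by (rule list_emb_append_mono)
      then show ?thesis using Cons by simp
    qed
  qed
qed

text \<open>The index of \<open>u\<close> truncated at \<open>p\<close>: \<open>m = min p (max {r. universal A r u})\<close>.\<close>

definition universality_index :: "'a set \<Rightarrow> nat \<Rightarrow> 'a list \<Rightarrow> nat \<Rightarrow> bool" where
  "universality_index A p u m \<longleftrightarrow> universal A m u \<and> (m = p \<or> \<not> universal A (Suc m) u)"

lemma universality_index_exists: "\<exists>m\<le>p. universality_index A p u m"
proof (induction p)
  case 0 then show ?case by (simp add: universality_index_def)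
next
  case (Suc p)
  then obtain m where m: "m \<le> p" "universality_index A p u m" by blast
  show ?case
  proof (cases "m = p \<and> universal A (Suc p) u")
    case True then show ?thesis by (auto simp: universality_index_def)
  next
    case False
    then show ?thesis using m by (intro exI[of _ m]) (auto simp: universality_index_def)
  qed
qed

section \<open>Simon's congruence\<close>

lemma simon_eq_refl [simp]: "simon_eq p u u"
  by (simp add: simon_eq_def)

lemma simon_eq_sym: "simon_eq p u v \<Longrightarrow> simon_eq p v u"
  by (simp add: simon_eq_def)

lemma simon_eq_trans: "simon_eq p u v \<Longrightarrow> simon_eq p v w \<Longrightarrow> simon_eq p u w"
  by (simp add: simon_eq_def)

lemma simon_eq_0 [simp]: "simon_eq 0 u v"
  by (auto simp: simon_eq_def subwords_upto_def)

lemma simon_eq_set: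
  assumes "simon_eq q x x'" "0 < q"
  shows "set x = set x'"
proof -
  have "c \<in> set x \<longleftrightarrow> [c] \<in> subwords_upto q x" "c \<in> set x' \<longleftrightarrow> [c] \<in> subwords_upto q x'" for c
    using assms(2) by (simp_all add: subwords_upto_def subseq_singleton_left)
  then show ?thesis using assms(1) unfolding simon_eq_def by blast
qed

lemma subseq_append_universal_left:
  assumes "universal A r y" "w \<in> lists A" "subseq w (y @ t)"
  shows "\<exists>w1 w2. w = w1 @ w2 \<and> subseq w1 y \<and> subseq w2 t \<and> (r \<le> length w1 \<or> w2 = [])"
proof -
  obtain a b where ab: "w = a @ b" "subseq a y" "subseq b t"
    using assms(3) by (auto elim: subseq_appendE)
  consider "r \<le> length a" | "length w \<le> r" | "length a < r" "r < length w" by linarith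
  then show ?thesis
  proof cases
    case 1 then show ?thesis using ab by blast
  next
    case 2
    then have "subseq w y" using assms(1,2) unfolding universal_def by blast
    then show ?thesis by (intro exI[of _ w] exI[of _ "[]"]) auto
  next
    case 3
    have "take r w \<in> lists A" using assms(2) by (auto dest: in_set_takeD)
    then have "subseq (take r w) y" using assms(1) unfolding universal_def by simp
    moreover have "subseq (drop r w) b"
      using 3 ab(1) by (simp add: suffix_imp_subseq suffix_drop)
    then have "subseq (drop r w) t" using ab(3) by (rule subseq_order.order_trans)
    ultimately show ?thesis using 3 by (intro exI[of _ "take r w"] exI[of _ "drop r w"]) auto
  qed
qed

lemma subseq_append_universal_right:
  assumes "universal A s z" "w \<in> lists A" "subseq w (t @ z)"
  shows "\<exists>w1 w2. w = w1 @ w2 \<and> subseq w1 t \<and> subseq w2 z \<and> (s \<le> length w2 \<or> w1 = [])"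
proof -
  obtain a b where ab: "w = a @ b" "subseq a t" "subseq b z"
    using assms(3) by (auto elim: subseq_appendE)
  define i where "i = length w - s"
  consider "s \<le> length b" | "length w \<le> s" | "length b < s" "s < length w" by linarith
  then show ?thesis
  proof cases
    case 1 then show ?thesis using ab by blast
  next
    case 2
    then have "subseq w z" using assms(1,2) unfolding universal_def by blast
    then show ?thesis by (intro exI[of _ "[]"] exI[of _ w]) auto
  next
    case 3
    have "drop i w \<in> lists A" using assms(2) by (auto dest: in_set_dropD)
    then have "subseq (drop i w) z" using assms(1) unfolding universal_def i_def by simp
    moreover have "subseq (take i w) a"
      using 3 ab(1) unfolding i_def by (simp add: prefix_imp_subseq take_is_prefix)
    then have "subseq (take i w) t" using ab(2) by (rule subseq_order.order_trans)
    ultimately show ?thesis using 3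
      by (intro exI[of _ "take i w"] exI[of _ "drop i w"]) (auto simp: i_def)
  qed
qed

text \<open>By the two lemmas above, a subword of \<open>y v z\<close> of length at most \<open>p\<close> embeds so that
  at most \<open>p - r - s\<close> of its letters fall into \<open>v\<close>.\<close>

lemma simon_eq_sandwich_subset:
  assumes "universal A r y" "universal A s z" "simon_eq q v v'" "p \<le> q + r + s"
    and "y @ v @ z \<in> lists A"
  shows "subwords_upto p (y @ v @ z) \<subseteq> subwords_upto p (y @ v' @ z)"
proof
  fix w assume "w \<in> subwords_upto p (y @ v @ z)"
  then have w: "subseq w (y @ v @ z)" "length w \<le> p" by (auto simp: subwords_upto_def)
  have wA: "w \<in> lists A" using subseq_set_subset[OF w(1)] assms(5) by auto
  obtain w1 w2 where w12: "w = w1 @ w2" "subseq w1 y" "subseq w2 (v @ z)" "r \<le> length w1 \<or> w2 = []"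
    using subseq_append_universal_left[OF assms(1) wA w(1)] by blast
  have "subseq w2 (v' @ z)"
  proof (cases "w2 = []")
    case False
    then have r: "r \<le> length w1" using w12 by simp
    have "w2 \<in> lists A" using wA w12(1) by simp
    then obtain a b where ab: "w2 = a @ b" "subseq a v" "subseq b z" "s \<le> length b \<or> a = []"
      using subseq_append_universal_right[OF assms(2) _ w12(3)] by blast
    have "subseq a v'"
    proof (cases "a = []")
      case False
      then have "length a \<le> q" using ab w(2) w12(1) r assms(4) by simp
      then show ?thesis using ab(2) assms(3) by (auto simp: simon_eq_def subwords_upto_def)
    qed simp
    then show ?thesis using ab by (simp add: list_emb_append_mono)
  qed simp
  then have "subseq w (y @ v' @ z)" using w12 by (simp add: list_emb_append_mono)
  then show "w \<in> subwords_upto p (y @ v' @ z)" using w(2) by (simp add: subwords_upto_def)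
qed

lemma simon_eq_sandwich:
  assumes "universal A r y" "universal A s z" "simon_eq q v v'" "p \<le> q + r + s"
    and "y @ v @ z \<in> lists A" "y @ v' @ z \<in> lists A"
  shows "simon_eq p (y @ v @ z) (y @ v' @ z)"
  using simon_eq_sandwich_subset[OF assms(1-5)]
    simon_eq_sandwich_subset[OF assms(1,2) simon_eq_sym[OF assms(3)] assms(4,6)]
  unfolding simon_eq_def by blast

lemma simon_eq_append_right:
  assumes "simon_eq n u v" "u @ w \<in> lists A" "v @ w \<in> lists A"
  shows "simon_eq n (u @ w) (v @ w)"
  using simon_eq_sandwich[of A 0 "[]" 0 w n u v n] assms by simp

lemma simon_eq_arch_replace:
  assumes "universal A m v" "m < p" "a \<in> A" "a \<notin> set x" "A \<subseteq> insert a (set x)"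
    and "simon_eq (p - m) x x'" "simon_eq (p - 1) v v'"
    and "x @ a # v \<in> lists A" "x' \<in> lists A" "v' \<in> lists A"
  shows "simon_eq p (x @ a # v) (x' @ a # v')"
proof -
  have "universal A m ([a] @ v)" using assms(1) by (rule universal_append_left)
  then have "simon_eq p ([] @ x @ (a # v)) ([] @ x' @ (a # v))"
    using assms(2,3,8,9) by (intro simon_eq_sandwich[OF universal_0 _ assms(6)]) auto
  moreover have "set x' = set x"
    using simon_eq_set[OF assms(6)] assms(2) by simp
  then have "universal A 1 (x' @ [a])"
    using universal_arch_iff[of a A x' 0 "[]"] assms(3,4,5) by auto
  then have "simon_eq p ((x' @ [a]) @ v @ []) ((x' @ [a]) @ v' @ [])"
    using assms(2,3,8,9,10) by (intro simon_eq_sandwich[OF _ universal_0 assms(7)]) auto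
  ultimately show ?thesis by (auto intro: simon_eq_trans)
qed

section \<open>Counting Simon classes\<close>

definition simon_reps :: "'a set \<Rightarrow> nat \<Rightarrow> 'a list set \<Rightarrow> 'a list set \<Rightarrow> bool" where
  "simon_reps A p U R \<longleftrightarrow> R \<subseteq> lists A \<and> finite R \<and> (\<forall>u\<in>U. \<exists>r\<in>R. simon_eq p u r)"

lemma simon_repsD:
  assumes "simon_reps A p U R"
  shows "R \<subseteq> lists A" "finite R" "u \<in> U \<Longrightarrow> \<exists>r\<in>R. simon_eq p u r"
  using assms unfolding simon_reps_def by blast+

lemma simon_reps_mono:
  "simon_reps B p U R \<Longrightarrow> B \<subseteq> A \<Longrightarrow> U' \<subseteq> U \<Longrightarrow> simon_reps A p U' R"
  unfolding simon_reps_def using lists_mono by blast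

lemma simon_reps_UN:
  assumes "finite I" "\<And>i. i \<in> I \<Longrightarrow> simon_reps A p (U i) (R i)"
  shows "simon_reps A p (\<Union>i\<in>I. U i) (\<Union>i\<in>I. R i)"
proof -
  have R: "R i \<subseteq> lists A" "finite (R i)" "\<forall>u\<in>U i. \<exists>r\<in>R i. simon_eq p u r" if "i \<in> I" for i
    using assms(2)[OF that] unfolding simon_reps_def by auto
  have "(\<Union>i\<in>I. R i) \<subseteq> lists A" using R(1) by blast
  moreover have "finite (\<Union>i\<in>I. R i)" using finite_UN_I[OF assms(1) R(2)] .
  moreover have "\<forall>u\<in>(\<Union>i\<in>I. U i). \<exists>r\<in>(\<Union>i\<in>I. R i). simon_eq p u r" using R(3) by blast
  ultimately show ?thesis unfolding simon_reps_def by blast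
qed

text \<open>Unfolding the recursion, a word of universality index \<open>m\<close> is a product of \<open>m\<close> arches
  \<open>x a\<close>, where \<open>x\<close> avoids the letter \<open>a\<close> and matters only up to \<open>\<sim>\<^bsub>p-m+1\<^esub>\<close>, followed by a
  word that avoids some letter and matters only up to \<open>\<sim>\<^bsub>p-m\<^esub>\<close>.\<close>

fun class_bound :: "nat \<Rightarrow> nat \<Rightarrow> nat" where
  "class_bound 0 p = 1"
| "class_bound (Suc k) p = (\<Sum>m\<le>p. (Suc k * class_bound k (p - m + 1)) ^ m *
      (if m = p then 1 else Suc k * class_bound k (p - m)))"

definition level_class_bound :: "nat \<Rightarrow> nat \<Rightarrow> nat \<Rightarrow> nat" where
  "level_class_bound k p m = (Suc k * class_bound k (p - m + 1)) ^ m *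
      (if m = p then 1 else Suc k * class_bound k (p - m))"

lemma class_bound_Suc: "class_bound (Suc k) p = (\<Sum>m\<le>p. level_class_bound k p m)"
  by (simp add: level_class_bound_def)

declare class_bound.simps(2) [simp del]

lemma level_class_bound_Suc:
  "m \<le> p \<Longrightarrow> level_class_bound k (Suc p) (Suc m) = Suc k * class_bound k (p - m + 1) * level_class_bound k p m"
  by (simp add: level_class_bound_def)



lemma simon_eq_arch_representative:
  assumes X: "\<And>a. a \<in> A \<Longrightarrow> simon_reps A (p - m + 1) (lists (A - {a})) (X a)"
    and V: "simon_reps A p {v \<in> lists A. universality_index A p v m} V"
    and "m \<le> p" "A \<noteq> {}"
    and u: "u \<in> lists A" "universality_index A (Suc p) u (Suc m)"
  shows "\<exists>a\<in>A. \<exists>x'\<in>X a. \<exists>v'\<in>V. simon_eq (Suc p) u (x' @ a # v')"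
proof -
  have "A \<subseteq> set u"
    using u(2) universal_Suc_imp_subset_set unfolding universality_index_def by blast
  with \<open>A \<noteq> {}\<close> have "\<exists>x a v. u = x @ a # v \<and> a \<notin> set x \<and> A \<subseteq> insert a (set x)"
    by (rule arch_factorization)
  then obtain x a v where xav: "u = x @ a # v" "a \<notin> set x" "A \<subseteq> insert a (set x)"
    by blast
  have a: "a \<in> A" and v: "v \<in> lists A" and "x \<in> lists A"
    using u(1) unfolding xav(1) by simp_all
  then have x: "x \<in> lists (A - {a})" using xav(2) by auto
  have v_index: "universality_index A p v m"
    using u(2) unfolding xav(1) universality_index_def universal_arch_iff[OF a xav(2,3)] by simp
  then obtain v' where v': "v' \<in> V" "simon_eq p v v'" using simon_repsD(3)[OF V, of v] v by blast
  obtain x' where x': "x' \<in> X a" "simon_eq (p - m + 1) x x'" using simon_repsD(3)[OF X[OF a] x] by blast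
  have "x' \<in> lists A" "v' \<in> lists A"
    using simon_repsD(1)[OF X[OF a]] simon_repsD(1)[OF V] x'(1) v'(1) by blast+
  moreover have "universal A m v" "Suc p - m = p - m + 1"
    using v_index assms(3) by (simp_all add: universality_index_def)
  ultimately have "simon_eq (Suc p) u (x' @ a # v')"
    using simon_eq_arch_replace[of A m v "Suc p" a x x' v'] a xav x'(2) v'(2) u(1) assms(3)
    by simp
  then show ?thesis using a x'(1) v'(1) by blast
qed

context
  fixes A :: "'a set" and k :: nat
  assumes finite_A: "finite A" and card_A: "card A = Suc k"
    and reps_smaller: "\<And>B :: 'a set. \<And>q. finite B \<Longrightarrow> card B = k \<Longrightarrow>
      \<exists>R. simon_reps B q (lists B) R \<and> card R \<le> class_bound k q"
begin

lemma simon_reps_avoiding_letter: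
  obtains X where "\<And>a. a \<in> A \<Longrightarrow> simon_reps A q (lists (A - {a})) (X a) \<and> card (X a) \<le> class_bound k q"
proof -
  have "\<forall>a\<in>A. \<exists>R. simon_reps A q (lists (A - {a})) R \<and> card R \<le> class_bound k q"
  proof
    fix a assume "a \<in> A"
    then have "card (A - {a}) = k" using finite_A card_A by simp
    then obtain R where "simon_reps (A - {a}) q (lists (A - {a})) R" "card R \<le> class_bound k q"
      using reps_smaller[of "A - {a}" q] finite_A by auto
    then show "\<exists>R. simon_reps A q (lists (A - {a})) R \<and> card R \<le> class_bound k q"
      using simon_reps_mono[of "A - {a}" q _ R A] by blast
  qed
  from bchoice[OF this] show thesis using that by blast
qed

lemma simon_reps_not_universal:
  "\<exists>R. simon_reps A p {u \<in> lists A. \<not> universal A 1 u} R \<and> card R \<le> Suc k * class_bound k p"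
proof -
  obtain X where X: "\<And>a. a \<in> A \<Longrightarrow> simon_reps A p (lists (A - {a})) (X a) \<and> card (X a) \<le> class_bound k p"
    using simon_reps_avoiding_letter by blast
  have "simon_reps A p (\<Union>a\<in>A. lists (A - {a})) (\<Union>a\<in>A. X a)"
    by (rule simon_reps_UN[OF finite_A]) (use X in blast)
  moreover have "{u \<in> lists A. \<not> universal A 1 u} \<subseteq> (\<Union>a\<in>A. lists (A - {a}))"
    using not_universal_1 by fastforce
  ultimately have "simon_reps A p {u \<in> lists A. \<not> universal A 1 u} (\<Union>a\<in>A. X a)"
    by (rule simon_reps_mono[OF _ order_refl])
  moreover have "card (\<Union>a\<in>A. X a) \<le> Suc k * class_bound k p"
  proof -
    have "card (\<Union>a\<in>A. X a) \<le> (\<Sum>a\<in>A. card (X a))" by (rule card_UN_le[OF finite_A])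
    also have "\<dots> \<le> (\<Sum>a\<in>A. class_bound k p)" by (intro sum_mono) (use X in blast)
    finally show ?thesis using card_A by simp
  qed
  ultimately show ?thesis by blast
qed

lemma simon_reps_index_Suc:
  assumes V: "simon_reps A p {v \<in> lists A. universality_index A p v m} V" and "m \<le> p"
  shows "\<exists>R. simon_reps A (Suc p) {u \<in> lists A. universality_index A (Suc p) u (Suc m)} R \<and>
    card R \<le> Suc k * class_bound k (p - m + 1) * card V"
proof -
  obtain X where X: "\<And>a. a \<in> A \<Longrightarrow> simon_reps A (p - m + 1) (lists (A - {a})) (X a) \<and>
      card (X a) \<le> class_bound k (p - m + 1)"
    using simon_reps_avoiding_letter by blast
  note XD = simon_repsD[OF conjunct1[OF X]]
  define S where "S = (SIGMA a:A. X a \<times> V)"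
  define R where "R = (\<lambda>(a, x, v). x @ a # v) ` S"
  have fin_S: "finite S"
    unfolding S_def using XD(2) simon_repsD(2)[OF V] finite_A by (auto intro!: finite_SigmaI)
  have "card R \<le> card S" unfolding R_def using fin_S by (rule card_image_le)
  also have "\<dots> = (\<Sum>a\<in>A. card (X a) * card V)"
    unfolding S_def using XD(2) simon_repsD(2)[OF V] finite_A by (simp add: card_SigmaI card_cartesian_product)
  also have "\<dots> \<le> (\<Sum>a\<in>A. class_bound k (p - m + 1) * card V)"
    using X by (intro sum_mono mult_right_mono) auto
  finally have card_R: "card R \<le> Suc k * class_bound k (p - m + 1) * card V"
    using card_A by (simp add: algebra_simps)
  have "A \<noteq> {}" using card_A by auto
  then have "\<exists>r\<in>R. simon_eq (Suc p) u r"
    if "u \<in> lists A" "universality_index A (Suc p) u (Suc m)" for u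
    using simon_eq_arch_representative[OF conjunct1[OF X] V assms(2) _ that] unfolding R_def S_def
    by force
  moreover have "R \<subseteq> lists A"
    unfolding R_def S_def using XD(1) simon_repsD(1)[OF V] by force
  moreover have "finite R" unfolding R_def using fin_S by (rule finite_imageI)
  ultimately have "simon_reps A (Suc p) {u \<in> lists A. universality_index A (Suc p) u (Suc m)} R"
    unfolding simon_reps_def by blast
  then show ?thesis using card_R by blast
qed

lemma simon_reps_index:
  "m \<le> p \<Longrightarrow> \<exists>R. simon_reps A p {u \<in> lists A. universality_index A p u m} R \<and>
     card R \<le> level_class_bound k p m"
proof (induction m arbitrary: p)
  case 0
  show ?case
  proof (cases "p = 0")
    case True
    then show ?thesis by (intro exI[of _ "{[]}"]) (simp add: simon_reps_def level_class_bound_def)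
  next
    case False
    have "{u \<in> lists A. universality_index A p u 0} \<subseteq> {u \<in> lists A. \<not> universal A 1 u}"
      using False by (auto simp: universality_index_def)
    moreover obtain R where "simon_reps A p {u \<in> lists A. \<not> universal A 1 u} R"
        "card R \<le> Suc k * class_bound k p"
      using simon_reps_not_universal by blast
    ultimately show ?thesis using False
      by (intro exI[of _ R]) (auto simp: level_class_bound_def intro: simon_reps_mono[OF _ order_refl])
  qed
next
  case (Suc m)
  then obtain p' where p: "p = Suc p'" and m: "m \<le> p'" by (cases p) auto
  obtain V where V: "simon_reps A p' {v \<in> lists A. universality_index A p' v m} V"
      "card V \<le> level_class_bound k p' m"
    using Suc.IH[OF m] by blast
  obtain R where "simon_reps A p {u \<in> lists A. universality_index A p u (Suc m)} R"
      "card R \<le> Suc k * class_bound k (p' - m + 1) * card V"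
    using simon_reps_index_Suc[OF V(1) m] unfolding p by blast
  moreover have "Suc k * class_bound k (p' - m + 1) * card V \<le> level_class_bound k p (Suc m)"
    unfolding p level_class_bound_Suc[OF m] using \<open>card V \<le> _\<close> by simp
  ultimately show ?case by (meson le_trans)
qed

end

lemma simon_reps_lists:
  fixes A :: "'a set"
  shows "finite A \<Longrightarrow> card A = k \<Longrightarrow> \<exists>R. simon_reps A p (lists A) R \<and> card R \<le> class_bound k p"
proof (induction k arbitrary: A p)
  case 0
  then have "lists A = {[]}" by auto
  then show ?case by (intro exI[of _ "{[]}"]) (simp add: simon_reps_def)
next
  case (Suc k)
  have "\<exists>R. simon_reps A p {u \<in> lists A. universality_index A p u m} R \<and> card R \<le> level_class_bound k p m"
    if "m \<le> p" for m
    using simon_reps_index[OF Suc.prems Suc.IH that] .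
  then have "\<forall>m\<in>{..p}. \<exists>R. simon_reps A p {u \<in> lists A. universality_index A p u m} R \<and>
      card R \<le> level_class_bound k p m" by simp
  from bchoice[OF this] obtain R where R: "\<forall>m\<in>{..p}.
      simon_reps A p {u \<in> lists A. universality_index A p u m} (R m) \<and> card (R m) \<le> level_class_bound k p m"
    by blast
  have "simon_reps A p (\<Union>m\<le>p. {u \<in> lists A. universality_index A p u m}) (\<Union>m\<le>p. R m)"
    using R by (intro simon_reps_UN) auto
  moreover have "lists A \<subseteq> (\<Union>m\<le>p. {u \<in> lists A. universality_index A p u m})"
    using universality_index_exists by blast
  ultimately have "simon_reps A p (lists A) (\<Union>m\<le>p. R m)"
    by (rule simon_reps_mono[OF _ order_refl])
  moreover have "card (\<Union>m\<le>p. R m) \<le> class_bound (Suc k) p"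
  proof -
    have "card (\<Union>m\<le>p. R m) \<le> (\<Sum>m\<le>p. card (R m))" by (rule card_UN_le) simp
    also have "\<dots> \<le> (\<Sum>m\<le>p. level_class_bound k p m)" using R by (intro sum_mono) auto
    finally show ?thesis by (simp add: class_bound_Suc)
  qed
  ultimately show ?case by blast
qed



lemma canonical_dfa_states_card_le_reps:
  assumes "n_PT A n L" and R: "simon_reps A n (lists A) R"
  shows "finite (canonical_dfa_states A L) \<and> card (canonical_dfa_states A L) \<le> card R"
proof -
  have "canonical_dfa_states A L \<subseteq> (\<lambda>r. left_quot A r L) ` R"
  proof
    fix Q assume "Q \<in> canonical_dfa_states A L"
    then obtain u where u: "Q = left_quot A u L" "u \<in> lists A"
      unfolding canonical_dfa_states_def by blast
    obtain r where r: "r \<in> R" "simon_eq n u r" "r \<in> lists A"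
      using simon_repsD[OF R] u(2) by blast
    have "u @ w \<in> L \<longleftrightarrow> r @ w \<in> L" if "w \<in> lists A" for w
      using simon_eq_append_right[OF r(2)] that u(2) r(3) assms(1) unfolding n_PT_def by simp
    then have "Q = left_quot A r L" unfolding u(1) left_quot_def by blast
    then show "Q \<in> (\<lambda>r. left_quot A r L) ` R" using r(1) by blast
  qed
  moreover have "finite R" by (rule simon_repsD(2)[OF R])
  ultimately show ?thesis
    using card_mono[of "(\<lambda>r. left_quot A r L) ` R"] card_image_le[of R "\<lambda>r. left_quot A r L"]
    by (meson finite_imageI finite_subset le_trans)
qed

section \<open>Solving the recursion\<close>

lemma weighted_am_gm:
  fixes a y :: real
  assumes "0 \<le> a" "0 \<le> y"
  shows "a * y ^ i \<le> ((a + real i * y) / (real i + 1)) ^ (i + 1)"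
proof (cases "y = 0")
  case True
  then show ?thesis using assms by (cases i) auto
next
  case False
  then have y: "y > 0" using assms(2) by simp
  define M where "M = (a + real i * y) / (real i + 1)"
  define t where "t = (M - y) / y"
  have "0 \<le> M" using assms unfolding M_def by simp
  then have "-1 \<le> t" using y unfolding t_def by (simp add: field_simps)
  then have bernoulli: "1 + real (i + 1) * t \<le> (1 + t) ^ (i + 1)" by (rule Bernoulli_inequality)
  have "M * (real i + 1) = a + real i * y" unfolding M_def by (simp add: field_simps)
  then have "a * y ^ i = y ^ i * (y + (real i + 1) * (M - y))" by (simp add: algebra_simps)
  also have "\<dots> = y ^ (i + 1) * (1 + real (i + 1) * t)"
    using y unfolding t_def by (simp add: field_simps)
  also have "\<dots> \<le> y ^ (i + 1) * (1 + t) ^ (i + 1)"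
    using bernoulli y by (intro mult_left_mono) auto
  also have "\<dots> = ((1 + t) * y) ^ (i + 1)" by (simp add: power_mult_distrib mult.commute)
  also have "(1 + t) * y = M" using y unfolding t_def by (simp add: field_simps)
  finally show ?thesis unfolding M_def .
qed

lemma one_plus_power_ge_quadratic:
  fixes x :: real
  assumes "0 \<le> x"
  shows "1 + real n * x + real n * (real n - 1) / 2 * x ^ 2 \<le> (1 + x) ^ n"
proof (induction n)
  case (Suc n)
  have "0 \<le> real n * (real n - 1) / 2 * x ^ 3" using assms by (cases n) auto
  then have "1 + real (Suc n) * x + real (Suc n) * (real (Suc n) - 1) / 2 * x ^ 2
      \<le> (1 + real n * x + real n * (real n - 1) / 2 * x ^ 2) * (1 + x)"
    by (simp add: field_simps power2_eq_square power3_eq_cube)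
  also have "\<dots> \<le> (1 + x) ^ n * (1 + x)" using Suc.IH assms by (intro mult_right_mono) auto
  finally show ?case by (simp add: mult.commute)
qed simp

lemma log2_of_nat_le: "0 < n \<Longrightarrow> log 2 (real n) \<le> real n"
  using less_exp[of n] by (intro log_of_power_le) (simp_all add: order_less_imp_le)

lemma add_2_le_exp: "2 \<le> n \<Longrightarrow> n + 2 \<le> 2 ^ n"
  by (induction n rule: nat_induct_at_least) auto

definition exponent_factor :: "nat \<Rightarrow> nat \<Rightarrow> real" where
  "exponent_factor k p = ((real p + 2 * real k - 3) / (real k - 1)) ^ (k - 1)"

text \<open>For \<open>L = log 2 n\<close> this is the exponent of the theorem; \<open>L\<close> is kept separate from
  \<open>p\<close> since the recursion lowers \<open>p\<close> but not \<open>n\<close>.\<close>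

definition state_exponent :: "real \<Rightarrow> nat \<Rightarrow> nat \<Rightarrow> real" where
  "state_exponent L k p = real k * exponent_factor k p * L * log 2 (real k)"

lemma exponent_factor_nonneg: "2 \<le> k \<Longrightarrow> 0 \<le> exponent_factor k p"
  unfolding exponent_factor_def by (intro zero_le_power divide_nonneg_nonneg) auto

lemma exponent_factor_ge_linear:
  assumes "3 \<le> k"
  shows "2 * (real p + 1) \<le> exponent_factor k p"
proof -
  define j where "j = k - 2"
  have k: "k = j + 2" and j: "1 \<le> j" using assms unfolding j_def by simp_all
  define x where "x = (real p + real j) / (real j + 1)"
  define Q where "Q = real (j + 1) * (real (j + 1) - 1) / 2 * x ^ 2"
  have linear: "real p + real j = real (j + 1) * x" unfolding x_def by (simp add: field_simps)
  have "real p \<le> 1 / 2 * (real p + 1) ^ 2 / 2"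
    using zero_le_power2[of "real p - 1"] by (simp add: power2_eq_square field_simps)
  also have "\<dots> \<le> real j / real (j + 1) * (real p + real j) ^ 2 / 2"
    using j by (intro divide_right_mono mult_mono power_mono) (auto simp: field_simps)
  also have "\<dots> = Q"
    unfolding linear Q_def by (simp add: power2_eq_square field_simps del: of_nat_add)
  finally have "2 * (real p + 1) \<le> 1 + (real p + real j) + Q" using j by simp
  also have "\<dots> \<le> (1 + x) ^ (j + 1)"
    unfolding linear Q_def by (rule one_plus_power_ge_quadratic) (simp add: x_def)
  also have "\<dots> = exponent_factor k p"
    unfolding exponent_factor_def k x_def by (simp add: field_simps)
  finally show ?thesis .
qed

text \<open>The exponent is designed so that the \<open>m\<close>-th summand of the recursion is paid for by
  the weighted AM-GM inequality.\<close>

lemma exponent_factor_recurrence: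
  assumes "2 \<le> k" "m \<le> p"
  shows "real m * exponent_factor k (p - m + 1) + exponent_factor k (p - m) \<le> exponent_factor (Suc k) p"
proof -
  define j where "j = k - 1"
  have k: "k = Suc j" and j: "1 \<le> j" using assms(1) unfolding j_def by simp_all
  define y where "y = (real (p - m) + 2 * real j) / real j"
  have "0 \<le> y" unfolding y_def by simp
  have "exponent_factor k (p - m + 1) = y ^ j"
    unfolding exponent_factor_def k y_def by (simp add: field_simps)
  moreover have "exponent_factor k (p - m) \<le> y ^ j"
  proof -
    have "exponent_factor k (p - m) = ((real (p - m) + 2 * real j - 1) / real j) ^ j"
      unfolding exponent_factor_def k by (simp add: field_simps)
    also have "\<dots> \<le> y ^ j"
      unfolding y_def using j by (intro power_mono divide_right_mono) auto
    finally show ?thesis .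
  qed
  ultimately have "real m * exponent_factor k (p - m + 1) + exponent_factor k (p - m) \<le> real (m + 1) * y ^ j"
    by (simp add: algebra_simps)
  also have "\<dots> \<le> ((real (m + 1) + real j * y) / (real j + 1)) ^ (j + 1)"
    using \<open>0 \<le> y\<close> by (intro weighted_am_gm) auto
  also have "real (m + 1) + real j * y = real p + 2 * real j + 1"
    unfolding y_def using j assms(2) by (simp add: of_nat_diff)
  also have "((real p + 2 * real j + 1) / (real j + 1)) ^ (j + 1) = exponent_factor (Suc k) p"
    unfolding exponent_factor_def k by (simp add: algebra_simps)
  finally show ?thesis .
qed

lemma state_exponent_recurrence:
  assumes "2 \<le> k" "m \<le> p" "1 \<le> L"
  shows "log 2 (real p + 1) + real m * (log 2 (real (Suc k)) + state_exponent L k (p - m + 1))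
      + (log 2 (real (Suc k)) + state_exponent L k (p - m)) \<le> state_exponent L (Suc k) p"
proof -
  define lk where "lk = log 2 (real (Suc k))"
  define P where "P = exponent_factor (Suc k) p"
  have lk: "1 \<le> lk" "0 \<le> log 2 (real k)" "log 2 (real k) \<le> lk"
    unfolding lk_def using assms(1) by auto
  have P: "2 * (real p + 1) \<le> P" unfolding P_def using assms(1) by (intro exponent_factor_ge_linear) simp
  have "real m * state_exponent L k (p - m + 1) + state_exponent L k (p - m)
      = real k * L * log 2 (real k) * (real m * exponent_factor k (p - m + 1) + exponent_factor k (p - m))"
    unfolding state_exponent_def by (simp add: algebra_simps)
  also have "\<dots> \<le> real k * L * lk * P"
    unfolding P_def using assms lk exponent_factor_recurrence[OF assms(1,2)] exponent_factor_nonneg[of "Suc k" p]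
      exponent_factor_nonneg[OF assms(1), of "p - m"] exponent_factor_nonneg[OF assms(1), of "p - m + 1"]
    by (intro mult_mono) auto
  finally have exponents: "real m * state_exponent L k (p - m + 1) + state_exponent L k (p - m)
      \<le> real k * L * lk * P" .
  have "log 2 (real p + 1) \<le> real p + 1" using log2_of_nat_le[of "Suc p"] by (simp add: add.commute)
  also have "\<dots> \<le> (real p + 1) * lk" using lk(1) by simp
  finally have "log 2 (real p + 1) \<le> (real p + 1) * lk" .
  moreover have "real (m + 1) * lk \<le> (real p + 1) * lk" using assms(2) lk(1) by (intro mult_right_mono) auto
  ultimately have "log 2 (real p + 1) + real (m + 1) * lk \<le> lk * (2 * (real p + 1))"
    by (simp add: algebra_simps)
  also have "\<dots> \<le> L * lk * P" using P lk(1) assms(3) mult_mono[OF assms(3) P] by (simp add: mult_mono)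
  finally have logs: "log 2 (real p + 1) + real (m + 1) * lk \<le> L * lk * P" .
  have "state_exponent L (Suc k) p = real k * L * lk * P + L * lk * P"
    unfolding state_exponent_def P_def lk_def by (simp add: algebra_simps)
  then show ?thesis using exponents logs unfolding lk_def by (simp add: algebra_simps)
qed

lemma class_bound_1 [simp]: "class_bound (Suc 0) p = Suc p"
proof -
  have "level_class_bound 0 p m = 1" for m by (simp add: level_class_bound_def)
  then show ?thesis by (simp add: class_bound_Suc)
qed

lemma class_bound_2_le_power: "class_bound 2 p \<le> (2 * p + 4) ^ (p + 2)"
proof -
  have "level_class_bound 1 p m \<le> (2 * p + 4) ^ (p + 1)" if "m \<le> p" for m
  proof -
    have "level_class_bound 1 p m \<le> (2 * p + 4) ^ m * (2 * p + 4)"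
      unfolding level_class_bound_def using that by (intro mult_mono power_mono) auto
    also have "\<dots> \<le> (2 * p + 4) ^ (p + 1)"
      using that by (simp add: power_increasing)
    finally show ?thesis .
  qed
  then have "class_bound 2 p \<le> (\<Sum>m\<le>p. (2 * p + 4) ^ (p + 1))"
    unfolding numeral_2_eq_2 class_bound_Suc One_nat_def[symmetric] by (intro sum_mono) simp
  also have "\<dots> = (p + 1) * (2 * p + 4) ^ (p + 1)" by simp
  also have "\<dots> \<le> (2 * p + 4) * (2 * p + 4) ^ (p + 1)" by (intro mult_right_mono) simp_all
  also have "\<dots> = (2 * p + 4) ^ (p + 2)" by simp
  finally show ?thesis .
qed

lemma class_bound_2_le: "class_bound 2 p \<le> max 2 p ^ (2 * p + 2)"
proof (cases "p \<le> 5")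
  case True
  have small_values: "class_bound 2 0 = 1" "class_bound 2 1 = 8" "class_bound 2 2 = 46" "class_bound 2 3 = 264"
    "class_bound 2 4 = 1594" "class_bound 2 5 = 10212"
    by code_simp+
  consider "p = 0" | "p = 1" | "p = 2" | "p = 3" | "p = 4" | "p = 5" using True by linarith
  then show ?thesis by cases (simp_all add: small_values del: One_nat_def)
next
  case False
  have "class_bound 2 p \<le> (2 * p + 4) * (2 * p + 4) ^ (p + 1)"
    using class_bound_2_le_power[of p] by simp
  also have "\<dots> \<le> 2 ^ (p + 1) * (2 * p + 4) ^ (p + 1)"
    using add_2_le_exp[of p] False by (intro mult_right_mono) auto
  also have "\<dots> = (2 * (2 * p + 4)) ^ (p + 1)" by (rule power_mult_distrib[symmetric])
  also have "\<dots> \<le> (p ^ 2) ^ (p + 1)"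
  proof (rule power_mono)
    have "2 * (2 * p + 4) \<le> 6 * p" using False by simp
    also have "\<dots> \<le> p * p" using False by (intro mult_right_mono) auto
    finally show "2 * (2 * p + 4) \<le> p ^ 2" by (simp only: power2_eq_square)
  qed simp
  also have "\<dots> = p ^ (2 * (p + 1))" by (rule power_mult[symmetric])
  finally show ?thesis using False by simp
qed

lemma level_class_bound_le_exponent:
  assumes "2 \<le> k" "1 \<le> L" "m \<le> p"
    and IH: "\<And>q. q \<le> p \<Longrightarrow> real (class_bound k q) \<le> 2 powr state_exponent L k q"
  shows "real (level_class_bound k p m) \<le> 2 powr state_exponent L (Suc k) p / (real p + 1)"
proof -
  define lk where "lk = log 2 (real (Suc k))"
  have factor: "real (Suc k * class_bound k q) \<le> 2 powr (lk + state_exponent L k q)" if "q \<le> p" for q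
  proof -
    have "real (Suc k * class_bound k q) = 2 powr lk * real (class_bound k q)"
      unfolding lk_def by (simp add: algebra_simps)
    also have "\<dots> \<le> 2 powr lk * 2 powr state_exponent L k q"
      using IH[OF that] by (intro mult_left_mono) auto
    finally show ?thesis by (simp add: powr_add)
  qed
  have arches: "real ((Suc k * class_bound k (p - m + 1)) ^ m)
      \<le> 2 powr (real m * (lk + state_exponent L k (p - m + 1)))"
  proof (cases "m = 0")
    case False
    then have "real (Suc k * class_bound k (p - m + 1)) ^ m \<le> (2 powr (lk + state_exponent L k (p - m + 1))) ^ m"
      using factor[of "p - m + 1"] assms(3) by (intro power_mono) auto
    then show ?thesis by (simp add: powr_power mult.commute)
  qed simp
  have rest: "real (if m = p then 1 else Suc k * class_bound k (p - m)) \<le> 2 powr (lk + state_exponent L k (p - m))"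
  proof -
    have "0 \<le> lk + state_exponent L k (p - m)"
      unfolding lk_def state_exponent_def using assms(1,2) exponent_factor_nonneg[OF assms(1)] by simp
    then show ?thesis using factor[of "p - m"] by (auto simp: ge_one_powr_ge_zero)
  qed
  have "real (level_class_bound k p m)
      \<le> 2 powr (real m * (lk + state_exponent L k (p - m + 1))) * 2 powr (lk + state_exponent L k (p - m))"
    unfolding level_class_bound_def of_nat_mult using arches rest by (intro mult_mono) auto
  also have "\<dots> \<le> 2 powr (state_exponent L (Suc k) p - log 2 (real p + 1))"
    unfolding powr_add[symmetric] lk_def using state_exponent_recurrence[OF assms(1,3,2)] by simp
  also have "\<dots> = 2 powr state_exponent L (Suc k) p / (real p + 1)"
    by (simp add: powr_diff)
  finally show ?thesis .
qed

lemma class_bound_Suc_le_exponent: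
  assumes "2 \<le> k" "1 \<le> L"
    and IH: "\<And>q. q \<le> p \<Longrightarrow> real (class_bound k q) \<le> 2 powr state_exponent L k q"
  shows "real (class_bound (Suc k) p) \<le> 2 powr state_exponent L (Suc k) p"
proof -
  have "real (class_bound (Suc k) p) \<le> (\<Sum>m\<le>p. 2 powr state_exponent L (Suc k) p / (real p + 1))"
    unfolding class_bound_Suc of_nat_sum
    using level_class_bound_le_exponent[OF assms(1,2) _ IH] by (intro sum_mono) auto
  also have "\<dots> = 2 powr state_exponent L (Suc k) p" by (simp add: add.commute)
  finally show ?thesis .
qed

text \<open>The induction on the alphabet size starts at \<open>k = 2\<close>: for \<open>k = 1\<close> the exponent
  vanishes, whereas \<open>class_bound 1 p = p + 1\<close>.\<close>

lemma class_bound_le_exponent: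
  assumes "2 \<le> k" "2 \<le> N" "p \<le> N"
  shows "real (class_bound k p) \<le> 2 powr state_exponent (log 2 (real N)) k p"
  using assms(1,3)
proof (induction k arbitrary: p rule: nat_induct_at_least)
  case base
  have "real (class_bound 2 p) \<le> real (max 2 p) ^ (2 * p + 2)"
    using class_bound_2_le[of p] by (metis of_nat_le_iff of_nat_power)
  also have "\<dots> \<le> real N ^ (2 * p + 2)" using assms(2) base by (intro power_mono) auto
  also have "\<dots> = real N powr real (2 * p + 2)"
    using assms(2) by (subst powr_realpow) auto
  also have "\<dots> = (2 powr log 2 (real N)) powr real (2 * p + 2)"
    using assms(2) by simp
  also have "\<dots> = 2 powr state_exponent (log 2 (real N)) 2 p"
    unfolding powr_powr by (simp add: state_exponent_def exponent_factor_def algebra_simps)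
  finally show ?case .
next
  case (Suc k)
  show ?case
    using Suc assms(2) by (intro class_bound_Suc_le_exponent) auto
qed

theorem theorem2:
  fixes A :: "'a set" and k n :: nat and L :: "'a list set"
  assumes "finite A" and "card A = k" and "k > 1" and "n \<ge> 2"
    and "n_PT A n L"
  shows "finite (canonical_dfa_states A L) \<and>
         real (card (canonical_dfa_states A L)) \<le>
           2 powr (real k * ((real n + 2 * real k - 3) / (real k - 1)) ^ (k - 1)
                   * log 2 (real n) * log 2 (real k))"
proof -
  obtain R where R: "simon_reps A n (lists A) R" "card R \<le> class_bound k n"
    using simon_reps_lists[OF assms(1,2)] by blast
  have states: "finite (canonical_dfa_states A L)" "card (canonical_dfa_states A L) \<le> card R"
    using canonical_dfa_states_card_le_reps[OF assms(5) R(1)] by auto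
  have "real (card (canonical_dfa_states A L)) \<le> real (class_bound k n)"
    using states(2) R(2) by simp
  also have "\<dots> \<le> 2 powr state_exponent (log 2 (real n)) k n"
    using assms(3,4) by (intro class_bound_le_exponent) auto
  finally show ?thesis
    using states(1) by (simp add: state_exponent_def exponent_factor_def)
qed

end
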